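(* Let $\epsilon:\mathbb{N}\to[0,\infty)$ be a non-decreasing function and let $\mathcal{A}$ be a deterministic online linear optimization algorithm on $\mathbb{R}^d$, outputting $x_t\in\mathbb{R}^d$ as a function of $g_1,\dots,g_{t-1}$, such that for every $t$ and every sequence $g_1,\dots,g_t\in\mathbb{R}^d$ with $\|g_i\|_2\le1$ we have $\sum_{i=1}^t\langle g_i,x_i\rangle\le\epsilon(t)$ (i.e. its regret against the competitor $0$ is at most $\epsilon(t)$). Then for every $T$, every sequence $g_1,\dots,g_T$ with $\|g_i\|_2\le1$ and every $t=1,\dots,T$, \[ \|x_t\|_2\le\epsilon(T)-\sum_{i=1}^{t-1}\langle g_i,x_i\rangle, \] and consequently there exists $\beta_t\in\mathbb{R}^d$ with $\|\beta_t\|_2\le1$ such that $x_t=\beta_t\left(\epsilon(T)-\sum_{i=1}^{t-1}\langle g_i,x_i\rangle\right)$. *)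

theory Defs
  imports "HOL-Analysis.Analysis"
begin

text \<open>Gradient sequences are indexed from 1.\<close>

definition olo_pred :: "('a list \<Rightarrow> 'a) \<Rightarrow> (nat \<Rightarrow> 'a) \<Rightarrow> nat \<Rightarrow> 'a" where
  "olo_pred A g t = A (map g [1..<t])"

end

theory Submission
  imports Defs
begin

text \<open>Since x_t depends only on g_1, ..., g_{t-1}, an adversary may replay the given gradients
  up to round t-1 and then play the unit vector sgn x_t, gaining exactly norm x_t in round t.
  The regret bound for this sequence at horizon t, together with monotonicity of \<epsilon>, gives
  norm x_t \<le> \<epsilon> T - \<Sum>_{i<t} g_i \<bullet> x_i; rescaling x_t by this bound yields \<beta>_t.\<close>

lemma olo_pred_cong:
  assumes "\<And>i. i \<in> {1..<t} \<Longrightarrow> h i = g i"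
  shows "olo_pred A h t = olo_pred A g t"
  unfolding olo_pred_def using assms by (intro arg_cong[where f = A] map_cong) auto

lemma inner_sgn_self: "inner (sgn x) x = norm x"
  by (cases "x = 0") (simp_all add: sgn_div_norm dot_square_norm power2_eq_square)

lemma scaleR_unit_ball_of_norm_le:
  fixes x :: "'a::real_normed_vector"
  assumes "norm x \<le> c"
  shows "\<exists>\<beta>. norm \<beta> \<le> 1 \<and> x = c *\<^sub>R \<beta>"
proof (cases "c = 0")
  case True
  with assms show ?thesis by (intro exI[of _ 0]) auto
next
  case False
  with assms have "c > 0" using norm_ge_zero[of x] by linarith
  with assms show ?thesis by (intro exI[of _ "x /\<^sub>R c"]) (auto simp: divide_simps)
qed

lemma olo_pred_norm_le_regret:
  fixes A :: "'a::real_inner list \<Rightarrow> 'a" and g :: "nat \<Rightarrow> 'a"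
  assumes regret: "\<And>h. (\<forall>i\<in>{1..t}. norm (h i) \<le> 1) \<Longrightarrow>
                     (\<Sum>i=1..t. inner (h i) (olo_pred A h i)) \<le> E"
    and g_bdd: "\<forall>i\<in>{1..<t}. norm (g i) \<le> 1"
    and "1 \<le> t"
  shows "norm (olo_pred A g t) \<le> E - (\<Sum>i=1..<t. inner (g i) (olo_pred A g i))"
proof -
  define x where "x = olo_pred A g t"
  define h where "h = (\<lambda>i. if i < t then g i else sgn x)"
  have h_bdd: "\<forall>i\<in>{1..t}. norm (h i) \<le> 1"
    using g_bdd by (auto simp: h_def norm_sgn)
  have h_pred: "olo_pred A h i = olo_pred A g i" if "i \<le> t" for i
    using that by (intro olo_pred_cong) (auto simp: h_def)
  have "{1..t} = insert t {1..<t}" using \<open>1 \<le> t\<close> by auto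
  then have "(\<Sum>i=1..t. inner (h i) (olo_pred A h i))
      = inner (h t) (olo_pred A h t) + (\<Sum>i=1..<t. inner (h i) (olo_pred A h i))"
    by simp
  also have "inner (h t) (olo_pred A h t) = norm x"
    using h_pred[of t] by (simp add: h_def x_def inner_sgn_self)
  also have "(\<Sum>i=1..<t. inner (h i) (olo_pred A h i)) = (\<Sum>i=1..<t. inner (g i) (olo_pred A g i))"
    using h_pred by (intro sum.cong) (auto simp: h_def)
  finally show ?thesis
    using regret[OF h_bdd] by (simp add: x_def)
qed

theorem mainTheorem10:
  fixes \<epsilon> :: "nat \<Rightarrow> real"
    and A :: "'a::euclidean_space list \<Rightarrow> 'a"
    and g :: "nat \<Rightarrow> 'a"
    and T t :: nat
  assumes eps_nonneg: "\<And>n. \<epsilon> n \<ge> 0"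
    and eps_mono: "mono \<epsilon>"
    and regret: "\<And>s h. (\<forall>i\<in>{1..s}. norm (h i) \<le> 1) \<Longrightarrow>
                  (\<Sum>i=1..s. inner (h i) (olo_pred A h i)) \<le> \<epsilon> s"
    and g_bdd: "\<forall>i\<in>{1..T}. norm (g i) \<le> 1"
    and t_range: "t \<in> {1..T}"
  shows "norm (olo_pred A g t) \<le> \<epsilon> T - (\<Sum>i=1..<t. inner (g i) (olo_pred A g i))
       \<and> (\<exists>\<beta>::'a. norm \<beta> \<le> 1 \<and>
            olo_pred A g t = (\<epsilon> T - (\<Sum>i=1..<t. inner (g i) (olo_pred A g i))) *\<^sub>R \<beta>)"
proof -
  have "\<epsilon> t \<le> \<epsilon> T" using eps_mono t_range by (simp add: mono_def)
  then have "(\<Sum>i=1..t. inner (h i) (olo_pred A h i)) \<le> \<epsilon> T"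
    if "\<forall>i\<in>{1..t}. norm (h i) \<le> 1" for h
    using regret[OF that] by linarith
  moreover have "\<forall>i\<in>{1..<t}. norm (g i) \<le> 1" using g_bdd t_range by auto
  ultimately have "norm (olo_pred A g t) \<le> \<epsilon> T - (\<Sum>i=1..<t. inner (g i) (olo_pred A g i))"
    using t_range by (intro olo_pred_norm_le_regret) auto
  then show ?thesis using scaleR_unit_ball_of_norm_le by blast
qed

end
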